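(* Let $\mathcal{S}$ be a semifilter. Then $\mathbb{Q}\times\mathcal{S}$ is homeomorphic to a semifilter.
   Context: $\mathbb{Q}$ denotes the space of rationals. A semifilter (on $\omega$) is a collection $\mathcal{S}\subseteq\mathcal{P}(\omega)$ such that $\varnothing\notin\mathcal{S}$, $\omega\in\mathcal{S}$, $\mathcal{S}$ is closed under finite modifications (if $x\in\mathcal{S}$ and $y\subseteq\omega$ with $(x\setminus y)\cup(y\setminus x)$ finite then $y\in\mathcal{S}$), and $\mathcal{S}$ is upward-closed. Subsets of $\mathcal{P}(\omega)$ are identified via characteristic functions with subspaces of $2^\omega$. *)

theory Defs
  imports "HOL-Analysis.Analysis"
begin

definition semifilter :: "nat set set \<Rightarrow> bool" where
  "semifilter S \<longleftrightarrow>
     {} \<notin> S \<and> UNIV \<in> S \<and>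
     (\<forall>x y. x \<in> S \<and> finite ((x - y) \<union> (y - x)) \<longrightarrow> y \<in> S) \<and>
     (\<forall>x y. x \<in> S \<and> x \<subseteq> y \<longrightarrow> y \<in> S)"

definition char_fun :: "nat set \<Rightarrow> (nat \<Rightarrow> bool)" where
  "char_fun x = (\<lambda>n. n \<in> x)"

definition cantor_space :: "(nat \<Rightarrow> bool) topology" where
  "cantor_space = product_topology (\<lambda>_. discrete_topology (UNIV :: bool set)) UNIV"

end

theory Submission
  imports Defs
begin

text \<open>
By Cantor's back-and-forth argument, \<open>\<rat>\<close> is order-isomorphic to the countable set of
sequences that differ from \<open>1010\<dots>\<close> in finitely many places, ordered lexicographically.
On this set the lexicographic order topology coincides with the Cantor topology, so the
order isomorphism is a homeomorphism. Recording where a sequence agrees with \<open>1010\<dots>\<close>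
carries this set homeomorphically onto the cofinite subsets of \<open>\<omega>\<close>. Finally, interleaving
a cofinite set on the even numbers with a member of \<open>\<S>\<close> on the odd numbers identifies
\<open>\<rat> \<times> \<S>\<close> with a semifilter, since both the cofinite sets and \<open>\<S>\<close> are semifilters.
\<close>

section \<open>Countable dense linear orders without endpoints\<close>

locale strict_linear_on =
  fixes A :: "'a set" and less :: "'a \<Rightarrow> 'a \<Rightarrow> bool" (infix "\<sqsubset>" 50)
  assumes irrefl: "x \<in> A \<Longrightarrow> \<not> x \<sqsubset> x"
    and trans: "\<lbrakk>x \<in> A; y \<in> A; z \<in> A; x \<sqsubset> y; y \<sqsubset> z\<rbrakk> \<Longrightarrow> x \<sqsubset> z"
    and total: "\<lbrakk>x \<in> A; y \<in> A; x \<noteq> y\<rbrakk> \<Longrightarrow> x \<sqsubset> y \<or> y \<sqsubset> x"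
begin

lemma strict_linear_on_converse: "strict_linear_on A (\<lambda>x y. y \<sqsubset> x)"
proof
  show "\<lbrakk>x \<in> A; y \<in> A; z \<in> A; y \<sqsubset> x; z \<sqsubset> y\<rbrakk> \<Longrightarrow> z \<sqsubset> x" for x y z
    using trans[of z y x] by simp
qed (use irrefl total in auto)

lemma finite_has_greatest:
  assumes "finite X" "X \<noteq> {}" "X \<subseteq> A"
  shows "\<exists>m\<in>X. \<forall>x\<in>X - {m}. x \<sqsubset> m"
  using assms
proof (induction X rule: finite_ne_induct)
  case (insert y X)
  then obtain m where m: "m \<in> X" "\<forall>x\<in>X - {m}. x \<sqsubset> m" by auto
  show ?case
  proof (cases "m \<sqsubset> y")
    case True
    have "x \<sqsubset> y" if "x \<in> X - {y}" for x
    proof (cases "x = m")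
      case False
      then show ?thesis using m that insert.prems True trans[of x m y] by auto
    qed (use True in simp)
    then have "\<forall>x\<in>insert y X - {y}. x \<sqsubset> y" by blast
    then show ?thesis by blast
  next
    case False
    have "m \<noteq> y" using m(1) insert.hyps by blast
    then have "y \<sqsubset> m" using False total[of m y] m(1) insert.prems by auto
    then show ?thesis using m by blast
  qed
qed simp

end

locale dense_unbounded_on = strict_linear_on +
  assumes dense: "\<lbrakk>x \<in> A; y \<in> A; x \<sqsubset> y\<rbrakk> \<Longrightarrow> \<exists>z\<in>A. x \<sqsubset> z \<and> z \<sqsubset> y"
    and no_least: "x \<in> A \<Longrightarrow> \<exists>y\<in>A. y \<sqsubset> x"
    and no_greatest: "x \<in> A \<Longrightarrow> \<exists>y\<in>A. x \<sqsubset> y"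
begin

lemma dense_unbounded_on_converse: "dense_unbounded_on A (\<lambda>x y. y \<sqsubset> x)"
  by (intro dense_unbounded_on.intro strict_linear_on_converse dense_unbounded_on_axioms.intro)
     (use dense no_least no_greatest in fastforce)+

lemma exists_above:
  assumes "finite L" "L \<subseteq> A" "A \<noteq> {}"
  shows "\<exists>b\<in>A. \<forall>x\<in>L. x \<sqsubset> b"
proof (cases "L = {}")
  case False
  then obtain m where m: "m \<in> L" "\<forall>x\<in>L - {m}. x \<sqsubset> m"
    using finite_has_greatest assms by blast
  then obtain b where "b \<in> A" "m \<sqsubset> b" using no_greatest assms by blast
  then have "x \<sqsubset> b" if "x \<in> L" for x
    using m that assms trans[of x m b] by (cases "x = m") auto
  then show ?thesis using \<open>b \<in> A\<close> by blast
qed (use assms in blast)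

lemma exists_between:
  assumes "finite L" "finite U" "L \<subseteq> A" "U \<subseteq> A" "A \<noteq> {}"
    and below: "\<forall>x\<in>L. \<forall>y\<in>U. x \<sqsubset> y"
  shows "\<exists>b\<in>A. (\<forall>x\<in>L. x \<sqsubset> b) \<and> (\<forall>y\<in>U. b \<sqsubset> y)"
proof -
  interpret dual: dense_unbounded_on A "\<lambda>x y. y \<sqsubset> x"
    by (rule dense_unbounded_on_converse)
  consider "L = {}" | "U = {}" | "L \<noteq> {}" "U \<noteq> {}" by blast
  then show ?thesis
  proof cases
    case 1
    then show ?thesis using dual.exists_above[OF assms(2,4,5)] by blast
  next
    case 2
    then show ?thesis using exists_above[OF assms(1,3,5)] by blast
  next
    case 3
    obtain m where m: "m \<in> L" "\<forall>x\<in>L - {m}. x \<sqsubset> m"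
      using finite_has_greatest[OF assms(1) 3(1) assms(3)] by blast
    obtain u where u: "u \<in> U" "\<forall>y\<in>U - {u}. u \<sqsubset> y"
      using dual.finite_has_greatest[OF assms(2) 3(2) assms(4)] by blast
    obtain b where b: "b \<in> A" "m \<sqsubset> b" "b \<sqsubset> u"
      using dense[of m u] below m(1) u(1) assms(3,4) by blast
    have "x \<sqsubset> b" if "x \<in> L" for x
      using m b that assms trans[of x m b] by (cases "x = m") auto
    moreover have "b \<sqsubset> y" if "y \<in> U" for y
      using u b that assms trans[of b u y] by (cases "y = u") auto
    ultimately show ?thesis using b(1) by blast
  qed
qed

end

definition partial_iso :: "('a \<Rightarrow> 'a \<Rightarrow> bool) \<Rightarrow> ('b \<Rightarrow> 'b \<Rightarrow> bool) \<Rightarrow> ('a \<times> 'b) set \<Rightarrow> bool" where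
  "partial_iso la lb P \<longleftrightarrow> (\<forall>a b a' b'. (a, b) \<in> P \<longrightarrow> (a', b') \<in> P \<longrightarrow> (la a a' \<longleftrightarrow> lb b b'))"

lemma partial_iso_converse: "partial_iso lb la (P\<inverse>) \<longleftrightarrow> partial_iso la lb P"
  unfolding partial_iso_def by auto

lemma partial_iso_insert_forth:
  assumes A: "strict_linear_on A la" and B: "dense_unbounded_on B lb" "B \<noteq> {}"
    and P: "finite P" "P \<subseteq> A \<times> B" "partial_iso la lb P" and a: "a \<in> A"
  shows "\<exists>b\<in>B. partial_iso la lb (insert (a, b) P)"
proof (cases "a \<in> fst ` P")
  case True
  then obtain b where "(a, b) \<in> P" by force
  then show ?thesis using P by (metis insert_absorb mem_Sigma_iff subsetD)
next
  case False
  interpret A: strict_linear_on A la by (rule A)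
  interpret B: dense_unbounded_on B lb by (rule B)
  define L where "L = {b. \<exists>a'. (a', b) \<in> P \<and> la a' a}"
  define U where "U = {b. \<exists>a'. (a', b) \<in> P \<and> la a a'}"
  have "L \<subseteq> snd ` P" "U \<subseteq> snd ` P" unfolding L_def U_def by force+
  then have fin: "finite L" "finite U" using P(1) finite_subset by blast+
  have sub: "L \<subseteq> B" "U \<subseteq> B" using P(2) unfolding L_def U_def by auto
  have "\<forall>x\<in>L. \<forall>y\<in>U. lb x y"
  proof (intro ballI)
    fix x y assume "x \<in> L" "y \<in> U"
    then obtain a1 a2 where "(a1, x) \<in> P" "la a1 a" "(a2, y) \<in> P" "la a a2"
      unfolding L_def U_def by blast
    moreover from this have "la a1 a2" using P(2) a A.trans[of a1 a a2] by auto
    ultimately show "lb x y" using P(3) unfolding partial_iso_def by blast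
  qed
  then obtain b where b: "b \<in> B" "\<forall>x\<in>L. lb x b" "\<forall>y\<in>U. lb b y"
    using B.exists_between[OF fin sub B(2)] by blast
  have "(la a a' \<longleftrightarrow> lb b b') \<and> (la a' a \<longleftrightarrow> lb b' b)" if "(a', b') \<in> P" for a' b'
  proof -
    have "a' \<in> A" "b' \<in> B" "a' \<noteq> a" using that P(2) False by force+
    then consider "la a a'" | "la a' a" using A.total a by blast
    then show ?thesis
    proof cases
      case 1
      then have "lb b b'" using that b(3) unfolding U_def by blast
      then show ?thesis
        using 1 A.irrefl A.trans B.irrefl B.trans \<open>a' \<in> A\<close> \<open>b' \<in> B\<close> a b(1) by metis
    next
      case 2
      then have "lb b' b" using that b(2) unfolding L_def by blast
      then show ?thesis
        using 2 A.irrefl A.trans B.irrefl B.trans \<open>a' \<in> A\<close> \<open>b' \<in> B\<close> a b(1) by metis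
    qed
  qed
  then have "partial_iso la lb (insert (a, b) P)"
    using P(3) A.irrefl[OF a] B.irrefl[OF b(1)] unfolding partial_iso_def by auto
  then show ?thesis using b(1) by blast
qed

lemma partial_iso_insert_back:
  assumes A: "dense_unbounded_on A la" "A \<noteq> {}" and B: "strict_linear_on B lb"
    and P: "finite P" "P \<subseteq> A \<times> B" "partial_iso la lb P" and b: "b \<in> B"
  shows "\<exists>a\<in>A. partial_iso la lb (insert (a, b) P)"
proof -
  have "finite (P\<inverse>)" "P\<inverse> \<subseteq> B \<times> A" "partial_iso lb la (P\<inverse>)"
    using P partial_iso_converse by auto
  then obtain a where "a \<in> A" "partial_iso lb la (insert (b, a) (P\<inverse>))"
    using partial_iso_insert_forth[OF B A] b by blast
  moreover have "insert (b, a) (P\<inverse>) = (insert (a, b) P)\<inverse>" by auto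
  ultimately show ?thesis using partial_iso_converse by metis
qed

lemma partial_iso_extend_to_pair:
  assumes A: "dense_unbounded_on A la" "A \<noteq> {}" and B: "dense_unbounded_on B lb" "B \<noteq> {}"
    and P: "finite P" "P \<subseteq> A \<times> B" "partial_iso la lb P" and a: "a \<in> A" and b: "b \<in> B"
  shows "\<exists>P'. P \<subseteq> P' \<and> finite P' \<and> P' \<subseteq> A \<times> B \<and> partial_iso la lb P' \<and>
    a \<in> fst ` P' \<and> b \<in> snd ` P'"
proof -
  obtain b' where b': "b' \<in> B" "partial_iso la lb (insert (a, b') P)"
    using partial_iso_insert_forth[OF dense_unbounded_on.axioms(1)[OF A(1)] B P a] by blast
  have P': "finite (insert (a, b') P)" "insert (a, b') P \<subseteq> A \<times> B"
    using P a b' by auto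
  obtain a' where a': "a' \<in> A" "partial_iso la lb (insert (a', b) (insert (a, b') P))"
    using partial_iso_insert_back[OF A dense_unbounded_on.axioms(1)[OF B(1)] P' b'(2) b] by blast
  show ?thesis
    using P' a' b by (intro exI[of _ "insert (a', b) (insert (a, b') P)"]) auto
qed

lemma partial_iso_UN_incseq:
  assumes "incseq P" "\<And>n. partial_iso la lb (P n)"
  shows "partial_iso la lb (\<Union>n. P n)"
  unfolding partial_iso_def
proof (intro allI impI)
  fix a b a' b' assume "(a, b) \<in> (\<Union>n. P n)" "(a', b') \<in> (\<Union>n. P n)"
  then obtain m m' where "(a, b) \<in> P m" "(a', b') \<in> P m'" by blast
  then have "(a, b) \<in> P (max m m')" "(a', b') \<in> P (max m m')"
    using incseqD[OF assms(1)] by (meson max.cobounded1 max.cobounded2 subsetD)+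
  then show "la a a' \<longleftrightarrow> lb b b'" using assms(2) unfolding partial_iso_def by blast
qed

lemma partial_iso_exhausting:
  assumes A: "dense_unbounded_on A la" "countable A" "A \<noteq> {}"
    and B: "dense_unbounded_on B lb" "countable B" "B \<noteq> {}"
  shows "\<exists>R \<subseteq> A \<times> B. partial_iso la lb R \<and> fst ` R = A \<and> snd ` R = B"
proof -
  define enlarges where "enlarges P n P' \<longleftrightarrow> P \<subseteq> P' \<and> finite P' \<and> P' \<subseteq> A \<times> B \<and>
      partial_iso la lb P' \<and> from_nat_into A n \<in> fst ` P' \<and> from_nat_into B n \<in> snd ` P'"
    for P n P'
  have grow: "\<exists>P'. enlarges P n P'"
    if "finite P" "P \<subseteq> A \<times> B" "partial_iso la lb P" for P n
    unfolding enlarges_def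
    by (rule partial_iso_extend_to_pair[OF A(1,3) B(1,3) that from_nat_into[OF A(3)]
          from_nat_into[OF B(3)]])
  define seq where "seq = rec_nat {} (\<lambda>n P. SOME P'. enlarges P n P')"
  have seq_good: "finite (seq n) \<and> seq n \<subseteq> A \<times> B \<and> partial_iso la lb (seq n)" for n
  proof (induction n)
    case (Suc n)
    then show ?case using someI_ex[OF grow] by (simp add: seq_def enlarges_def)
  qed (simp add: seq_def partial_iso_def)
  have seq_Suc: "enlarges (seq n) n (seq (Suc n))" for n
    using someI_ex[OF grow] seq_good by (simp add: seq_def)
  define R where "R = (\<Union>n. seq n)"
  have RAB: "R \<subseteq> A \<times> B" using seq_good unfolding R_def by blast
  have cover: "from_nat_into A n \<in> fst ` R" "from_nat_into B n \<in> snd ` R" for n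
    using seq_Suc[of n] unfolding enlarges_def R_def by blast+
  have "fst ` R = A"
  proof
    show "fst ` R \<subseteq> A" using RAB by auto
    show "A \<subseteq> fst ` R" using cover(1) range_from_nat_into[OF A(3,2)] by (metis image_subsetI)
  qed
  moreover have "snd ` R = B"
  proof
    show "snd ` R \<subseteq> B" using RAB by auto
    show "B \<subseteq> snd ` R" using cover(2) range_from_nat_into[OF B(3,2)] by (metis image_subsetI)
  qed
  moreover have "partial_iso la lb R"
    unfolding R_def using seq_Suc seq_good unfolding enlarges_def
    by (intro partial_iso_UN_incseq incseq_SucI) auto
  ultimately show ?thesis using RAB by blast
qed

lemma partial_iso_bij_betw:
  assumes A: "strict_linear_on A la" and B: "strict_linear_on B lb"
    and R: "R \<subseteq> A \<times> B" "partial_iso la lb R" "fst ` R = A" "snd ` R = B"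
  shows "\<exists>f. bij_betw f A B \<and> (\<forall>x\<in>A. \<forall>y\<in>A. la x y \<longleftrightarrow> lb (f x) (f y))"
proof -
  have same: "a = a' \<longleftrightarrow> b = b'" if "(a, b) \<in> R" "(a', b') \<in> R" for a b a' b'
  proof -
    have "a \<in> A" "a' \<in> A" "b \<in> B" "b' \<in> B" using that R(1) by auto
    moreover have "la a a' \<longleftrightarrow> lb b b'" "la a' a \<longleftrightarrow> lb b' b"
      using that R(2) unfolding partial_iso_def by blast+
    ultimately show ?thesis
      using strict_linear_on.irrefl[OF A, of a] strict_linear_on.total[OF A, of a a']
        strict_linear_on.irrefl[OF B, of b] strict_linear_on.total[OF B, of b b'] by auto
  qed
  define f where "f a = (SOME b. (a, b) \<in> R)" for a
  have f: "(a, f a) \<in> R" if "a \<in> A" for a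
    unfolding f_def using that R(3) by (force intro: someI_ex)
  have "bij_betw f A B"
  proof (rule bij_betw_imageI)
    show "inj_on f A"
    proof (rule inj_onI)
      fix x y assume "x \<in> A" "y \<in> A" "f x = f y"
      then show "x = y" using same[OF f f] by blast
    qed
    have "f a = b" if "(a, b) \<in> R" for a b
    proof -
      have "a \<in> A" using that R(1) by blast
      then show ?thesis using same[OF f[OF \<open>a \<in> A\<close>] that] by simp
    qed
    then show "f ` A = B" using f R(1,3,4) by force
  qed
  moreover have "\<forall>x\<in>A. \<forall>y\<in>A. la x y \<longleftrightarrow> lb (f x) (f y)"
    using f R(2) unfolding partial_iso_def by blast
  ultimately show ?thesis by blast
qed

theorem countable_dense_unbounded_order_iso:
  assumes "dense_unbounded_on A la" "countable A" "A \<noteq> {}"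
    and "dense_unbounded_on B lb" "countable B" "B \<noteq> {}"
  shows "\<exists>f. bij_betw f A B \<and> (\<forall>x\<in>A. \<forall>y\<in>A. la x y \<longleftrightarrow> lb (f x) (f y))"
proof -
  obtain R where "R \<subseteq> A \<times> B" "partial_iso la lb R" "fst ` R = A" "snd ` R = B"
    using partial_iso_exhausting[OF assms] by blast
  then show ?thesis
    by (rule partial_iso_bij_betw[OF dense_unbounded_on.axioms(1)[OF assms(1)]
          dense_unbounded_on.axioms(1)[OF assms(4)]])
qed


section \<open>The lexicographic order on almost-even sequences\<close>

definition lex_less :: "(nat \<Rightarrow> bool) \<Rightarrow> (nat \<Rightarrow> bool) \<Rightarrow> bool" where
  "lex_less p q \<longleftrightarrow> (\<exists>n. (\<forall>i<n. p i = q i) \<and> \<not> p n \<and> q n)"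

lemma lex_less_irrefl: "\<not> lex_less p p"
  unfolding lex_less_def by blast

lemma lex_less_trans:
  assumes "lex_less p q" "lex_less q r" shows "lex_less p r"
proof -
  obtain m where m: "\<forall>i<m. p i = q i" "\<not> p m" "q m" using assms(1) unfolding lex_less_def by blast
  obtain n where n: "\<forall>i<n. q i = r i" "\<not> q n" "r n" using assms(2) unfolding lex_less_def by blast
  have "m \<noteq> n" using m(3) n(2) by blast
  then consider "m < n" | "n < m" by linarith
  then show ?thesis
  proof cases
    case 1
    then have "\<forall>i<m. p i = r i" "r m" using m n by auto
    then show ?thesis using m(2) unfolding lex_less_def by blast
  next
    case 2
    then have "\<forall>i<n. p i = r i" "\<not> p n" using m n by auto
    then show ?thesis using n(3) unfolding lex_less_def by blast
  qed
qed

lemma lex_less_total: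
  assumes "p \<noteq> q" shows "lex_less p q \<or> lex_less q p"
proof -
  have "\<exists>k. p k \<noteq> q k" using assms by (auto simp: fun_eq_iff)
  define n where "n = (LEAST k. p k \<noteq> q k)"
  have "p n \<noteq> q n" unfolding n_def by (rule LeastI_ex) fact
  moreover have "\<forall>i<n. p i = q i" unfolding n_def using not_less_Least by blast
  ultimately show ?thesis unfolding lex_less_def by (cases "p n") auto
qed

lemma strict_linear_on_lex_less: "strict_linear_on A lex_less"
  by unfold_locales (use lex_less_irrefl lex_less_trans lex_less_total in blast)+

lemma lex_less_between_same_prefix:
  assumes "lex_less a x" "lex_less x b" "\<forall>i<N. a i = b i"
  shows "\<forall>i<N. x i = a i"
proof -
  obtain m where m: "\<forall>i<m. a i = x i" "\<not> a m" "x m" using assms(1) unfolding lex_less_def by blast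
  obtain n where n: "\<forall>i<n. x i = b i" "\<not> x n" "b n" using assms(2) unfolding lex_less_def by blast
  have "N \<le> m"
  proof (rule ccontr)
    assume "\<not> N \<le> m"
    then have "a m = b m" using assms(3) by simp
    have "m \<noteq> n" using m(3) n(2) by blast
    then consider "m < n" | "n < m" by linarith
    then show False
    proof cases
      case 1
      then show False using n(1) m(2,3) \<open>a m = b m\<close> by simp
    next
      case 2
      then show False using m(1) n(2,3) assms(3) \<open>\<not> N \<le> m\<close> by simp
    qed
  qed
  then show ?thesis using m(1) by simp
qed

lemma lex_less_on_cylinder_above:
  assumes "lex_less a d" shows "\<exists>N. \<forall>x. (\<forall>i<N. x i = d i) \<longrightarrow> lex_less a x"
proof -
  obtain n where n: "\<forall>i<n. a i = d i" "\<not> a n" "d n" using assms unfolding lex_less_def by blast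
  have "lex_less a x" if "\<forall>i<Suc n. x i = d i" for x
    using that n unfolding lex_less_def by (intro exI[of _ n]) auto
  then show ?thesis by blast
qed

lemma lex_less_on_cylinder_below:
  assumes "lex_less d b" shows "\<exists>N. \<forall>x. (\<forall>i<N. x i = d i) \<longrightarrow> lex_less x b"
proof -
  obtain n where n: "\<forall>i<n. d i = b i" "\<not> d n" "b n" using assms unfolding lex_less_def by blast
  have "lex_less x b" if "\<forall>i<Suc n. x i = d i" for x
    using that n unfolding lex_less_def by (intro exI[of _ n]) auto
  then show ?thesis by blast
qed

definition almost_even :: "(nat \<Rightarrow> bool) set" where
  "almost_even = {p. finite {n. p n \<noteq> even n}}"

lemma almost_even_eventually:
  assumes "p \<in> almost_even" shows "\<exists>B. \<forall>n\<ge>B. p n = even n"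
proof -
  obtain B where B: "\<And>n. p n \<noteq> even n \<Longrightarrow> n < B"
    using assms unfolding almost_even_def finite_nat_set_iff_bounded by auto
  show ?thesis by (meson B leD)
qed

lemma almost_even_fun_upd:
  assumes "p \<in> almost_even" shows "p(m := v) \<in> almost_even"
proof -
  have "{n. (p(m := v)) n \<noteq> even n} \<subseteq> insert m {n. p n \<noteq> even n}" by auto
  moreover have "finite (insert m {n. p n \<noteq> even n})" using assms unfolding almost_even_def by simp
  ultimately show ?thesis unfolding almost_even_def by (simp add: finite_subset)
qed

lemma almost_even_below_same_prefix:
  assumes "p \<in> almost_even" shows "\<exists>q\<in>almost_even. lex_less q p \<and> (\<forall>i<N. q i = p i)"
proof -
  obtain B where B: "\<forall>n\<ge>B. p n = even n" using almost_even_eventually[OF assms] by blast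
  define m where "m = 2 * (N + B)"
  have "p m" "N \<le> m" using B unfolding m_def by auto
  then have "lex_less (p(m := False)) p" "\<forall>i<N. (p(m := False)) i = p i"
    unfolding lex_less_def by (auto intro!: exI[of _ m])
  then show ?thesis using almost_even_fun_upd[OF assms] by blast
qed

lemma almost_even_above_same_prefix:
  assumes "p \<in> almost_even" shows "\<exists>q\<in>almost_even. lex_less p q \<and> (\<forall>i<N. q i = p i)"
proof -
  obtain B where B: "\<forall>n\<ge>B. p n = even n" using almost_even_eventually[OF assms] by blast
  define m where "m = Suc (2 * (N + B))"
  have "\<not> p m" "N \<le> m" using B unfolding m_def by auto
  then have "lex_less p (p(m := True))" "\<forall>i<N. (p(m := True)) i = p i"
    unfolding lex_less_def by (auto intro!: exI[of _ m])
  then show ?thesis using almost_even_fun_upd[OF assms] by blast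
qed

lemma dense_unbounded_on_almost_even: "dense_unbounded_on almost_even lex_less"
proof (intro dense_unbounded_on.intro strict_linear_on_lex_less dense_unbounded_on_axioms.intro)
  fix p q assume "p \<in> almost_even" "q \<in> almost_even" "lex_less p q"
  then obtain n where n: "\<forall>i<n. p i = q i" "\<not> p n" "q n" unfolding lex_less_def by blast
  obtain r where r: "r \<in> almost_even" "lex_less p r" "\<forall>i<Suc n. r i = p i"
    using almost_even_above_same_prefix[OF \<open>p \<in> almost_even\<close>] by blast
  have "lex_less r q" unfolding lex_less_def using n r(3) by (intro exI[of _ n]) auto
  then show "\<exists>r\<in>almost_even. lex_less p r \<and> lex_less r q" using r by blast
qed (use almost_even_below_same_prefix almost_even_above_same_prefix in blast)+

lemma countable_almost_even: "countable almost_even"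
proof (rule countable_subset)
  show "almost_even \<subseteq> (\<lambda>F n. (n \<in> F) \<noteq> even n) ` Collect finite"
  proof
    fix p assume "p \<in> almost_even"
    moreover have "p = (\<lambda>n. (n \<in> {n. p n \<noteq> even n}) \<noteq> even n)" by auto
    ultimately show "p \<in> (\<lambda>F n. (n \<in> F) \<noteq> even n) ` Collect finite"
      unfolding almost_even_def by blast
  qed
qed (simp add: countable_Collect_finite)

lemma dense_unbounded_on_rat: "dense_unbounded_on (\<rat> :: real set) (<)"
proof (unfold_locales)
  fix x :: real assume "x \<in> \<rat>"
  then have "x - 1 \<in> \<rat>" "x + 1 \<in> \<rat>" by simp_all
  then show "\<exists>y\<in>\<rat>. y < x" "\<exists>y\<in>\<rat>. x < y" by force+
qed (auto intro: Rats_dense_in_real)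

lemma rat_order_iso_almost_even:
  "\<exists>f. bij_betw f (\<rat> :: real set) almost_even \<and> (\<forall>x\<in>\<rat>. \<forall>y\<in>\<rat>. x < y \<longleftrightarrow> lex_less (f x) (f y))"
proof (rule countable_dense_unbounded_order_iso)
  have "even \<in> almost_even" unfolding almost_even_def by simp
  then show "almost_even \<noteq> {}" by blast
qed (auto simp: dense_unbounded_on_rat dense_unbounded_on_almost_even countable_almost_even
  countable_rat)


section \<open>The rationals as a subspace of the Cantor space\<close>

lemma topspace_cantor_space [simp]: "topspace cantor_space = UNIV"
  by (simp add: cantor_space_def)

lemma continuous_map_cantor_space_iff:
  "continuous_map X cantor_space h \<longleftrightarrow> (\<forall>k. continuous_map X (discrete_topology UNIV) (\<lambda>x. h x k))"
  unfolding cantor_space_def by (rule continuous_map_componentwise_UNIV)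

lemma continuous_map_cantor_space_coordinate:
  "continuous_map cantor_space (discrete_topology UNIV) (\<lambda>x. x k)"
  unfolding cantor_space_def by (rule continuous_map_product_projection) simp

lemma continuous_map_into_discrete_topology:
  assumes "\<And>b. openin X {x \<in> topspace X. h x = b}"
  shows "continuous_map X (discrete_topology UNIV) h"
  unfolding continuous_map_def
proof (intro conjI allI impI)
  fix U
  have "{x \<in> topspace X. h x \<in> U} = (\<Union>b\<in>U. {x \<in> topspace X. h x = b})" by auto
  then show "openin X {x \<in> topspace X. h x \<in> U}" using assms by auto
qed simp

lemma openin_cantor_space_cylinder: "openin cantor_space {x. \<forall>i<N. x i = d i}"
proof (induction N)
  case 0
  then show ?case using openin_topspace[of cantor_space] by simp
next
  case (Suc N)
  have "{x. \<forall>i<Suc N. x i = d i} = {x. \<forall>i<N. x i = d i} \<inter> {x \<in> topspace cantor_space. x N \<in> {d N}}"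
    by (auto simp: less_Suc_eq)
  moreover have "openin cantor_space {x \<in> topspace cantor_space. x N \<in> {d N}}"
    by (rule openin_continuous_map_preimage[OF continuous_map_cantor_space_coordinate]) simp
  ultimately show ?case using Suc.IH by auto
qed

locale rat_lex_iso =
  fixes f :: "real \<Rightarrow> nat \<Rightarrow> bool"
  assumes bij: "bij_betw f \<rat> almost_even"
    and less_iff: "\<lbrakk>x \<in> \<rat>; y \<in> \<rat>\<rbrakk> \<Longrightarrow> x < y \<longleftrightarrow> lex_less (f x) (f y)"
begin

abbreviation g :: "(nat \<Rightarrow> bool) \<Rightarrow> real" where "g \<equiv> inv_into \<rat> f"

lemma f_in_almost_even: "q \<in> \<rat> \<Longrightarrow> f q \<in> almost_even"
  using bij bij_betwE by blast

lemma g_in_rat: "d \<in> almost_even \<Longrightarrow> g d \<in> \<rat>"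
  using bij_betw_inv_into[OF bij] bij_betwE by blast

lemma f_g: "d \<in> almost_even \<Longrightarrow> f (g d) = d"
  using bij_betw_inv_into_right[OF bij] .

lemma g_f: "q \<in> \<rat> \<Longrightarrow> g (f q) = q"
  using bij_betw_inv_into_left[OF bij] .

lemma coordinates_locally_constant:
  assumes "q \<in> \<rat>"
  shows "\<exists>a b. a < q \<and> q < b \<and> (\<forall>x\<in>\<rat>. a < x \<and> x < b \<longrightarrow> (\<forall>i<N. f x i = f q i))"
proof -
  obtain d1 where d1: "d1 \<in> almost_even" "lex_less d1 (f q)" "\<forall>i<N. d1 i = f q i"
    using almost_even_below_same_prefix[OF f_in_almost_even[OF assms]] by blast
  obtain d2 where d2: "d2 \<in> almost_even" "lex_less (f q) d2" "\<forall>i<N. d2 i = f q i"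
    using almost_even_above_same_prefix[OF f_in_almost_even[OF assms]] by blast
  have "g d1 < q" "q < g d2"
    using less_iff[OF g_in_rat[OF d1(1)] assms] less_iff[OF assms g_in_rat[OF d2(1)]] d1(2) d2(2)
    unfolding f_g[OF d1(1)] f_g[OF d2(1)] by blast+
  moreover have "\<forall>i<N. f x i = f q i" if "x \<in> \<rat>" "g d1 < x" "x < g d2" for x
  proof -
    have "lex_less d1 (f x)" "lex_less (f x) d2"
      using that(2,3) less_iff[OF g_in_rat[OF d1(1)] that(1)]
        less_iff[OF that(1) g_in_rat[OF d2(1)]]
      unfolding f_g[OF d1(1)] f_g[OF d2(1)] by blast+
    then show ?thesis using lex_less_between_same_prefix[of d1 "f x" d2 N] d1(3) d2(3) by simp
  qed
  ultimately show ?thesis by blast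
qed

lemma continuous_map_f: "continuous_map (top_of_set \<rat>) cantor_space f"
  unfolding continuous_map_cantor_space_iff
proof (intro allI continuous_map_into_discrete_topology)
  fix k and c :: bool
  have "\<exists>e>0. \<forall>x\<in>\<rat>. dist x q < e \<longrightarrow> f x k = c" if q: "q \<in> \<rat>" "f q k = c" for q
  proof -
    obtain a b where ab: "a < q" "q < b" "\<forall>x\<in>\<rat>. a < x \<and> x < b \<longrightarrow> (\<forall>i<Suc k. f x i = f q i)"
      using coordinates_locally_constant[OF q(1)] by blast
    have "f x k = c" if "x \<in> \<rat>" "dist x q < min (q - a) (b - q)" for x
      using ab that q(2) by (auto simp: dist_real_def abs_less_iff)
    then show ?thesis using ab(1,2) by (intro exI[of _ "min (q - a) (b - q)"]) auto
  qed
  then show "openin (top_of_set \<rat>) {x \<in> topspace (top_of_set \<rat>). f x k = c}"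
    unfolding openin_euclidean_subtopology_iff by auto
qed

lemma g_cylinder_dist_less:
  assumes "d \<in> almost_even" "e > 0"
  shows "\<exists>N. \<forall>x\<in>almost_even. (\<forall>i<N. x i = d i) \<longrightarrow> dist (g x) (g d) < e"
proof -
  have gd: "g d \<in> \<rat>" using g_in_rat[OF assms(1)] .
  obtain q1 where q1: "q1 \<in> \<rat>" "g d - e < q1" "q1 < g d"
    using Rats_dense_in_real[of "g d - e" "g d"] assms(2) by auto
  obtain q2 where q2: "q2 \<in> \<rat>" "g d < q2" "q2 < g d + e"
    using Rats_dense_in_real[of "g d" "g d + e"] assms(2) by auto
  have "lex_less (f q1) (f (g d))" "lex_less (f (g d)) (f q2)"
    using less_iff[OF q1(1) gd] less_iff[OF gd q2(1)] q1(3) q2(2) by blast+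
  then have lt: "lex_less (f q1) d" "lex_less d (f q2)" unfolding f_g[OF assms(1)] .
  obtain N1 N2 where
    N1: "\<forall>x. (\<forall>i<N1. x i = d i) \<longrightarrow> lex_less (f q1) x" and
    N2: "\<forall>x. (\<forall>i<N2. x i = d i) \<longrightarrow> lex_less x (f q2)"
    using lex_less_on_cylinder_above[OF lt(1)] lex_less_on_cylinder_below[OF lt(2)] by blast
  have "dist (g x) (g d) < e" if "x \<in> almost_even" "\<forall>i<max N1 N2. x i = d i" for x
  proof -
    have "lex_less (f q1) x" "lex_less x (f q2)"
      using N1 N2 that(2) by simp_all
    then have "q1 < g x" "g x < q2"
      using less_iff[OF q1(1) g_in_rat[OF that(1)]] less_iff[OF g_in_rat[OF that(1)] q2(1)]
      unfolding f_g[OF that(1)] by blast+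
    then show ?thesis using q1 q2 by (simp add: dist_real_def abs_less_iff)
  qed
  then show ?thesis by blast
qed

lemma continuous_map_g: "continuous_map (subtopology cantor_space almost_even) (top_of_set \<rat>) g"
proof (rule continuous_map_into_subtopology)
  show "continuous_map (subtopology cantor_space almost_even) euclideanreal g"
    unfolding continuous_map_def
  proof (intro conjI allI impI)
    fix U :: "real set" assume "openin euclideanreal U"
    then have "open U" by simp
    have "\<exists>T. openin (subtopology cantor_space almost_even) T \<and> d \<in> T \<and>
        T \<subseteq> {x \<in> almost_even. g x \<in> U}"
      if d: "d \<in> almost_even" "g d \<in> U" for d
    proof -
      obtain e where "e > 0" "ball (g d) e \<subseteq> U" using \<open>open U\<close> d(2) open_contains_ball by blast
      then obtain N where N: "\<forall>x\<in>almost_even. (\<forall>i<N. x i = d i) \<longrightarrow> dist (g x) (g d) < e"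
        using g_cylinder_dist_less[OF d(1)] by blast
      have "openin (subtopology cantor_space almost_even) (almost_even \<inter> {x. \<forall>i<N. x i = d i})"
        by (rule openin_subtopology_Int2[OF openin_cantor_space_cylinder])
      moreover have "almost_even \<inter> {x. \<forall>i<N. x i = d i} \<subseteq> {x \<in> almost_even. g x \<in> U}"
        using N \<open>ball (g d) e \<subseteq> U\<close> by (auto simp: dist_commute)
      ultimately show ?thesis using d(1) by blast
    qed
    then show "openin (subtopology cantor_space almost_even)
        {x \<in> topspace (subtopology cantor_space almost_even). g x \<in> U}"
      by (subst openin_subopen) simp
  qed simp
qed (use g_in_rat in auto)

lemma homeomorphic_maps_f_g:
  "homeomorphic_maps (top_of_set \<rat>) (subtopology cantor_space almost_even) f g"
  unfolding homeomorphic_maps_def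
  using continuous_map_f f_in_almost_even continuous_map_g g_f f_g
  by (auto intro: continuous_map_into_subtopology)

end

lemma rat_homeomorphic_almost_even:
  "top_of_set (\<rat> :: real set) homeomorphic_space subtopology cantor_space almost_even"
proof -
  obtain f where "bij_betw f (\<rat> :: real set) almost_even"
    "\<forall>x\<in>\<rat>. \<forall>y\<in>\<rat>. x < y \<longleftrightarrow> lex_less (f x) (f y)"
    using rat_order_iso_almost_even by blast
  then interpret rat_lex_iso f by unfold_locales blast+
  show ?thesis unfolding homeomorphic_space_def using homeomorphic_maps_f_g by blast
qed


section \<open>Interleaving and semifilters\<close>

lemma char_fun_image_iff: "x \<in> char_fun ` F \<longleftrightarrow> Collect x \<in> F"
proof -
  have "char_fun (Collect x) = x" "Collect (char_fun t) = t" for t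
    by (simp_all add: char_fun_def)
  then show ?thesis by (metis image_iff)
qed

definition agreement :: "(nat \<Rightarrow> bool) \<Rightarrow> (nat \<Rightarrow> bool) \<Rightarrow> nat \<Rightarrow> bool" where
  "agreement e x = (\<lambda>n. x n = e n)"

lemma agreement_agreement [simp]: "agreement e (agreement e x) = x"
  by (auto simp: agreement_def)

lemma agreement_image_iff: "x \<in> agreement e ` A \<longleftrightarrow> agreement e x \<in> A"
  by (metis agreement_agreement image_iff)

lemma continuous_map_agreement: "continuous_map cantor_space cantor_space (agreement e)"
proof -
  have "continuous_map cantor_space (discrete_topology UNIV) ((\<lambda>b. b = e k) \<circ> (\<lambda>x. x k))" for k
    by (rule continuous_map_compose[OF continuous_map_cantor_space_coordinate]) simp
  then show ?thesis unfolding continuous_map_cantor_space_iff by (simp add: agreement_def o_def)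
qed

lemma homeomorphic_space_agreement:
  "subtopology cantor_space A homeomorphic_space subtopology cantor_space (agreement e ` A)"
proof -
  have "homeomorphic_maps cantor_space cantor_space (agreement e) (agreement e)"
    unfolding homeomorphic_maps_def using continuous_map_agreement by simp
  then show ?thesis
    unfolding homeomorphic_space_def using homeomorphic_maps_subtopologies by fastforce
qed

lemma agreement_even_almost_even: "agreement even ` almost_even = char_fun ` {t. finite (- t)}"
proof (intro set_eqI)
  fix x
  have "{n. agreement even x n \<noteq> even n} = - Collect x" by (auto simp: agreement_def)
  then show "x \<in> agreement even ` almost_even \<longleftrightarrow> x \<in> char_fun ` {t. finite (- t)}"
    by (simp add: agreement_image_iff char_fun_image_iff almost_even_def)
qed

definition interleave :: "(nat \<Rightarrow> bool) \<times> (nat \<Rightarrow> bool) \<Rightarrow> nat \<Rightarrow> bool" where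
  "interleave z = (\<lambda>i. if even i then fst z (i div 2) else snd z (i div 2))"

definition deinterleave :: "(nat \<Rightarrow> bool) \<Rightarrow> (nat \<Rightarrow> bool) \<times> (nat \<Rightarrow> bool)" where
  "deinterleave x = (\<lambda>n. x (2 * n), \<lambda>n. x (Suc (2 * n)))"

lemma deinterleave_interleave [simp]: "deinterleave (interleave z) = z"
  by (simp add: interleave_def deinterleave_def)

lemma interleave_deinterleave [simp]: "interleave (deinterleave x) = x"
  by (auto simp: interleave_def deinterleave_def fun_eq_iff)

lemma interleave_image_iff: "x \<in> interleave ` P \<longleftrightarrow> deinterleave x \<in> P"
  by (metis deinterleave_interleave interleave_deinterleave image_iff)

lemma homeomorphic_maps_interleave:
  "homeomorphic_maps (prod_topology cantor_space cantor_space) cantor_space interleave deinterleave"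
proof -
  have "continuous_map (prod_topology cantor_space cantor_space) (discrete_topology UNIV) (\<lambda>z. fst z m)"
    "continuous_map (prod_topology cantor_space cantor_space) (discrete_topology UNIV) (\<lambda>z. snd z m)"
    for m
    using continuous_map_compose[OF continuous_map_fst continuous_map_cantor_space_coordinate]
      continuous_map_compose[OF continuous_map_snd continuous_map_cantor_space_coordinate]
    by (simp_all add: o_def)
  then have "continuous_map (prod_topology cantor_space cantor_space) cantor_space interleave"
    unfolding continuous_map_cantor_space_iff interleave_def by simp
  moreover have "continuous_map cantor_space (prod_topology cantor_space cantor_space) deinterleave"
    unfolding continuous_map_pairwise continuous_map_cantor_space_iff deinterleave_def
    by (simp add: o_def continuous_map_cantor_space_coordinate)
  ultimately show ?thesis unfolding homeomorphic_maps_def by simp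
qed

lemma prod_homeomorphic_interleave:
  "prod_topology (subtopology cantor_space A) (subtopology cantor_space B)
     homeomorphic_space subtopology cantor_space (interleave ` (A \<times> B))"
proof -
  have "homeomorphic_maps (subtopology (prod_topology cantor_space cantor_space) (A \<times> B))
      (subtopology cantor_space (interleave ` (A \<times> B))) interleave deinterleave"
    by (rule homeomorphic_maps_subtopologies[OF homeomorphic_maps_interleave]) simp
  then show ?thesis
    unfolding homeomorphic_space_def
    by (auto simp: prod_topology_subtopology subtopology_subtopology Times_Int_Times)
qed

lemma semifilterI:
  assumes "{} \<notin> S" "UNIV \<in> S"
    and "\<And>x y. x \<in> S \<Longrightarrow> finite ((x - y) \<union> (y - x)) \<Longrightarrow> y \<in> S"
    and "\<And>x y. x \<in> S \<Longrightarrow> x \<subseteq> y \<Longrightarrow> y \<in> S"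
  shows "semifilter S"
  using assms unfolding semifilter_def by blast

lemma semifilterD:
  assumes "semifilter S"
  shows "{} \<notin> S" "UNIV \<in> S"
    and "x \<in> S \<Longrightarrow> finite ((x - y) \<union> (y - x)) \<Longrightarrow> y \<in> S"
    and "x \<in> S \<Longrightarrow> x \<subseteq> y \<Longrightarrow> y \<in> S"
  using assms unfolding semifilter_def by blast+

lemma semifilter_vimage:
  assumes "semifilter S" "inj h" shows "semifilter {t. h -` t \<in> S}"
proof (rule semifilterI)
  fix x y assume x: "x \<in> {t. h -` t \<in> S}" and fin: "finite ((x - y) \<union> (y - x))"
  have "h -` x - h -` y \<union> (h -` y - h -` x) = h -` ((x - y) \<union> (y - x))" by auto
  then have "finite (h -` x - h -` y \<union> (h -` y - h -` x))"
    using finite_vimageI[OF fin assms(2)] by simp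
  then show "y \<in> {t. h -` t \<in> S}" using semifilterD(3)[OF assms(1)] x by simp
next
  fix x y assume "x \<in> {t. h -` t \<in> S}" "x \<subseteq> y"
  then have "h -` x \<in> S" "h -` x \<subseteq> h -` y" by auto
  then show "y \<in> {t. h -` t \<in> S}" using semifilterD(4)[OF assms(1)] by simp
qed (use semifilterD(1,2)[OF assms(1)] in simp_all)

lemma semifilter_Int: "semifilter S \<Longrightarrow> semifilter T \<Longrightarrow> semifilter (S \<inter> T)"
  by (rule semifilterI) (blast dest: semifilterD)+

lemma semifilter_cofinite: "semifilter {t :: nat set. finite (- t)}"
proof (rule semifilterI)
  fix x y :: "nat set"
  assume "x \<in> {t. finite (- t)}" "finite ((x - y) \<union> (y - x))"
  moreover have "- y \<subseteq> - x \<union> ((x - y) \<union> (y - x))" by blast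
  ultimately show "y \<in> {t. finite (- t)}" using finite_subset by auto
next
  fix x y :: "nat set"
  assume "x \<in> {t. finite (- t)}" "x \<subseteq> y"
  moreover have "- y \<subseteq> - x" using \<open>x \<subseteq> y\<close> by blast
  ultimately show "y \<in> {t. finite (- t)}" using finite_subset[of "- y" "- x"] by simp
qed simp_all

definition interleave_family :: "nat set set \<Rightarrow> nat set set \<Rightarrow> nat set set" where
  "interleave_family S T = {t. (\<lambda>n. 2 * n) -` t \<in> S} \<inter> {t. (\<lambda>n. Suc (2 * n)) -` t \<in> T}"

lemma semifilter_interleave_family:
  "semifilter S \<Longrightarrow> semifilter T \<Longrightarrow> semifilter (interleave_family S T)"
  unfolding interleave_family_def
  by (intro semifilter_Int semifilter_vimage) (auto simp: inj_on_def)

lemma char_fun_interleave_family: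
  "char_fun ` interleave_family S T = interleave ` (char_fun ` S \<times> char_fun ` T)"
proof -
  have iff: "Collect x \<in> interleave_family S T \<longleftrightarrow> deinterleave x \<in> char_fun ` S \<times> char_fun ` T" for x
    by (simp add: interleave_family_def deinterleave_def char_fun_image_iff vimage_def)
  show ?thesis by (intro set_eqI) (simp only: char_fun_image_iff interleave_image_iff iff)
qed

theorem lemma8p2:
  fixes S :: "nat set set"
  assumes "semifilter S"
  shows "\<exists>T :: nat set set. semifilter T \<and>
           (prod_topology (subtopology euclideanreal \<rat>)
                          (subtopology cantor_space (char_fun ` S)))
             homeomorphic_space (subtopology cantor_space (char_fun ` T))"
proof -
  let ?C = "{t :: nat set. finite (- t)}"
  have "top_of_set (\<rat> :: real set) homeomorphic_space subtopology cantor_space (char_fun ` ?C)"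
    using homeomorphic_space_trans[OF rat_homeomorphic_almost_even homeomorphic_space_agreement[of _ even]]
    unfolding agreement_even_almost_even .
  then have "prod_topology (top_of_set (\<rat> :: real set)) (subtopology cantor_space (char_fun ` S))
      homeomorphic_space prod_topology (subtopology cantor_space (char_fun ` ?C))
        (subtopology cantor_space (char_fun ` S))"
    by (rule homeomorphic_space_prod_topology[OF _ homeomorphic_space_refl])
  also have "\<dots> homeomorphic_space subtopology cantor_space (char_fun ` interleave_family ?C S)"
    unfolding char_fun_interleave_family by (rule prod_homeomorphic_interleave)
  finally show ?thesis using semifilter_interleave_family[OF semifilter_cofinite assms] by blast
qed

end
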